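(* Let $D$ be a digraph rooted at $r$ and let $w \in V(D) \setminus \{r\}$. Suppose that $I \in \mathcal{G}_D(w)$ is such that $I \cup \{f\} \in \mathcal{G}_D(w)$ for every $f \in \mathrm{in}_D(w) \setminus I$. Assume that there is an edge $uv \in E(D)$ with $u \neq r$ and $v \neq w$ for which $I \notin \mathcal{G}_{D - uv}(w)$. Then there exist a set $S \subseteq V(D) \setminus \{r\}$ containing $v$ and an $(r,S)$-path-system $\mathcal{P}$ with $V^+(\mathcal{P}) = S$ such that $S$ separates the tails of the edges in $\mathrm{in}_D(v) \setminus \{uv\}$ from $r$ (i.e. every directed path from $r$ to such a tail meets $S$). In particular, $uv$ is the last edge of some $P \in \mathcal{P}$.
   Context: Digraphs have no loops or parallel edges; $D - uv$ is $D$ with the edge $uv$ deleted. $\mathrm{in}_H(w)$ is the set of edges of $H$ with head $w$. An $(r,w)$-path-system is a set of pairwise internally disjoint directed paths from $r$ to $w$; $E^+(\mathcal{P})$ is the set of terminal edges of the paths in $\mathcal{P}$. $\mathcal{G}_H(w)$ is the set of all $I \subseteq \mathrm{in}_H(w)$ for which some $(r,w)$-path-system $\mathcal{P}$ in $H$ has $E^+(\mathcal{P}) = I$. An $(r,S)$-path is a directed path starting at $r$, ending in $S$, and internally disjoint from $S$; an $(r,S)$-path-system is a set of $(r,S)$-paths pairwise disjoint except at $r$. $V^+(\mathcal{P})$ is the set of terminal vertices of the paths in $\mathcal{P}$. *)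

theory Defs
  imports Main
begin

text \<open>A (finite) digraph is a vertex set V with an edge relation E \<subseteq> V \<times> V,
  without loops (parallel edges are impossible for a relation).\<close>
definition digraph :: "'a set \<Rightarrow> ('a \<times> 'a) set \<Rightarrow> bool" where
  "digraph V E \<longleftrightarrow> finite V \<and> E \<subseteq> V \<times> V \<and> (\<forall>x. (x, x) \<notin> E)"

definition dpath :: "'a set \<Rightarrow> ('a \<times> 'a) set \<Rightarrow> 'a list \<Rightarrow> bool" where
  "dpath V E p \<longleftrightarrow> p \<noteq> [] \<and> distinct p \<and> set p \<subseteq> V \<and>
     (\<forall>i. Suc i < length p \<longrightarrow> (p ! i, p ! Suc i) \<in> E)"

definition inner :: "'a list \<Rightarrow> 'a set" where
  "inner p = set (butlast (tl p))"

text \<open>Terminal edge of a path (meaningful when the path has at least 2 vertices).\<close>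
definition last_edge :: "'a list \<Rightarrow> 'a \<times> 'a" where
  "last_edge p = (p ! (length p - 2), last p)"

definition in_edges :: "('a \<times> 'a) set \<Rightarrow> 'a \<Rightarrow> ('a \<times> 'a) set" where
  "in_edges E w = {e \<in> E. snd e = w}"

definition rw_path_system :: "'a set \<Rightarrow> ('a \<times> 'a) set \<Rightarrow> 'a \<Rightarrow> 'a \<Rightarrow> 'a list set \<Rightarrow> bool" where
  "rw_path_system V E r w Ps \<longleftrightarrow>
     (\<forall>p\<in>Ps. dpath V E p \<and> hd p = r \<and> last p = w) \<and>
     (\<forall>p\<in>Ps. \<forall>q\<in>Ps. p \<noteq> q \<longrightarrow> inner p \<inter> inner q = {})"

text \<open>\<G>_H(w): sets of in-edges of w realised as terminal edges of an (r,w)-path-system.\<close>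
definition Gset :: "'a set \<Rightarrow> ('a \<times> 'a) set \<Rightarrow> 'a \<Rightarrow> 'a \<Rightarrow> ('a \<times> 'a) set set" where
  "Gset V E r w = {I. I \<subseteq> in_edges E w \<and>
      (\<exists>Ps. rw_path_system V E r w Ps \<and> last_edge ` Ps = I)}"

definition rS_path_system :: "'a set \<Rightarrow> ('a \<times> 'a) set \<Rightarrow> 'a \<Rightarrow> 'a set \<Rightarrow> 'a list set \<Rightarrow> bool" where
  "rS_path_system V E r S Ps \<longleftrightarrow>
     (\<forall>p\<in>Ps. dpath V E p \<and> hd p = r \<and> last p \<in> S \<and> inner p \<inter> S = {}) \<and>
     (\<forall>p\<in>Ps. \<forall>q\<in>Ps. p \<noteq> q \<longrightarrow> set p \<inter> set q \<subseteq> {r})"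

end

(*
  Let T be the set of tails, other than r, of the edges in I. Removing the final vertex w from
  the paths of a system realising I, or realising I + f with the path through f kept whole,
  gives a fan L from r onto a set Y with T \<subseteq> Y \<subseteq> T + w whose paths meet w at most at their
  end, and such that Y contains w or every in-neighbour of w. Let H be D - uv without the
  out-edges of w. A fan from r onto Y in H would realise I in D - uv, so by Menger's theorem
  some Z \<subseteq> V - r with |Z| < |Y| separates r from Y in H. Each path of L avoiding uv lies in H
  and hence meets Z; since the |Y| paths of L meet only in r, exactly one of them, P, uses uv,
  it misses Z, and the others meet Z in distinct vertices covering Z. Cutting the others at
  Z and P at v gives the (r, Z + v)-path-system. A path from r to an in-neighbour x \<noteq> u of v
  avoiding Z + v would, continued along xv and the rest of P, reach Y in H while avoiding Z.
*)

theory Submission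
  imports Defs
begin

section \<open>Paths as vertex lists\<close>

definition path_edges :: "'a list \<Rightarrow> ('a \<times> 'a) set" where
  "path_edges p = set (zip p (tl p))"

lemma path_edges_simps [simp]:
  "path_edges [] = {}"
  "path_edges [x] = {}"
  "path_edges (x # y # p) = insert (x, y) (path_edges (y # p))"
  by (simp_all add: path_edges_def)

lemma path_edges_append:
  "xs \<noteq> [] \<Longrightarrow> ys \<noteq> [] \<Longrightarrow>
    path_edges (xs @ ys) = path_edges xs \<union> path_edges ys \<union> {(last xs, hd ys)}"
proof (induction xs rule: induct_list012)
  case (2 x)
  then show ?case by (cases ys) auto
next
  case (3 x y zs)
  then show ?case by auto
qed simp

lemma path_edges_append_subset: "path_edges xs \<union> path_edges ys \<subseteq> path_edges (xs @ ys)"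
  by (cases "xs = []"; cases "ys = []") (auto simp: path_edges_append)

lemma path_edges_subset: "path_edges p \<subseteq> set (butlast p) \<times> set (tl p)"
  by (induction p rule: induct_list012) auto

lemma path_edges_subset_set: "path_edges p \<subseteq> set p \<times> set p"
  by (induction p rule: induct_list012) auto

lemma dpath_iff_path_edges:
  "dpath V E p \<longleftrightarrow> p \<noteq> [] \<and> distinct p \<and> set p \<subseteq> V \<and> path_edges p \<subseteq> E"
proof -
  have "path_edges p = {(p ! i, p ! Suc i) |i. Suc i < length p}"
    by (auto simp: path_edges_def set_zip nth_tl)
  then show ?thesis
    by (auto simp: dpath_def)
qed

lemma dpath_Cons:
  "dpath V E (x # p) \<longleftrightarrow> x \<in> V \<and> x \<notin> set p \<and> (p = [] \<or> (x, hd p) \<in> E \<and> dpath V E p)"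
  by (cases p) (auto simp: dpath_iff_path_edges)

lemma dpath_append_iff:
  assumes "xs \<noteq> []" "ys \<noteq> []"
  shows "dpath V E (xs @ ys) \<longleftrightarrow>
    dpath V E xs \<and> dpath V E ys \<and> set xs \<inter> set ys = {} \<and> (last xs, hd ys) \<in> E"
  using assms by (auto simp: dpath_iff_path_edges path_edges_append)

lemma dpath_mono: "dpath V E p \<Longrightarrow> V \<subseteq> V' \<Longrightarrow> E \<subseteq> E' \<Longrightarrow> dpath V' E' p"
  by (auto simp: dpath_iff_path_edges)

lemma set_butlast_last: "p \<noteq> [] \<Longrightarrow> set p = insert (last p) (set (butlast p))"
  by (induction p) auto

lemma set_hd_tl: "p \<noteq> [] \<Longrightarrow> set p = insert (hd p) (set (tl p))"
  by (cases p) auto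

lemma set_tl_subset: "set (tl p) \<subseteq> set p"
  by (cases p) auto

lemma last_append_tl: "p \<noteq> [] \<Longrightarrow> q \<noteq> [] \<Longrightarrow> last p = hd q \<Longrightarrow> last (p @ tl q) = last q"
  by (cases q) auto

lemma dpath_join:
  assumes "dpath V E p" "dpath V E q" "last p = hd q" "set p \<inter> set q \<subseteq> {hd q}"
  shows "dpath V E (p @ tl q)"
proof (cases q)
  case (Cons x q')
  show ?thesis
  proof (cases q')
    case (Cons y q'')
    have "x \<notin> set q'" "(x, y) \<in> E" "dpath V E q'"
      using assms(2) \<open>q = x # q'\<close> Cons by (auto simp: dpath_Cons)
    moreover have "p \<noteq> []"
      using assms(1) by (simp add: dpath_def)
    ultimately show ?thesis
      using assms \<open>q = x # q'\<close> Cons dpath_append_iff[of p q'] by auto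
  qed (use assms(1) Cons in simp)
qed (use assms(2) in \<open>simp add: dpath_def\<close>)

lemma rtrancl_path_edges: "p \<noteq> [] \<Longrightarrow> (hd p, last p) \<in> (path_edges p)\<^sup>*"
proof (induction p rule: induct_list012)
  case (3 x y zs)
  have "(y, last (y # zs)) \<in> (path_edges (y # zs))\<^sup>*"
    using 3(2) by simp
  then have "(y, last (y # zs)) \<in> (path_edges (x # y # zs))\<^sup>*"
    by (rule rtrancl_mono[THEN subsetD, rotated]) auto
  then show ?case
    by (auto intro: converse_rtrancl_into_rtrancl)
qed simp_all

lemma path_edges_iff_split: "(u, v) \<in> path_edges p \<longleftrightarrow> (\<exists>xs ys. p = xs @ u # v # ys)"
proof
  show "(u, v) \<in> path_edges p \<Longrightarrow> \<exists>xs ys. p = xs @ u # v # ys"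
  proof (induction p rule: induct_list012)
    case (3 x y zs)
    show ?case
    proof (cases "(u, v) = (x, y)")
      case True
      then show ?thesis by auto
    next
      case False
      then obtain xs ys where "y # zs = xs @ u # v # ys"
        using 3 by auto
      then have "x # y # zs = (x # xs) @ u # v # ys"
        by simp
      then show ?thesis by blast
    qed
  qed simp_all
  assume "\<exists>xs ys. p = xs @ u # v # ys"
  then obtain xs ys where "p = xs @ u # v # ys"
    by blast
  then show "(u, v) \<in> path_edges p"
    by (cases "xs = []") (auto simp: path_edges_append)
qed

lemma dpath_first_hit:
  assumes "dpath V E p" "set p \<inter> X \<noteq> {}"
  obtains q where "dpath V E q" "hd q = hd p" "last q \<in> X" "set (butlast q) \<inter> X = {}"
    "set q \<subseteq> set p"
proof -
  obtain ys z zs where p: "p = ys @ z # zs" "z \<in> X" "\<forall>y\<in>set ys. y \<notin> X"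
    using split_list_first_prop[of p "\<lambda>x. x \<in> X"] assms(2) by blast
  have "dpath V E (ys @ [z])"
    using assms(1) p(1) dpath_append_iff[of "ys @ [z]" zs] by (cases zs) auto
  moreover have "hd (ys @ [z]) = hd p"
    using p(1) by (cases ys) auto
  ultimately show ?thesis
    using p by (intro that[of "ys @ [z]"]) auto
qed

lemma dpath_last_hit:
  assumes "dpath V E p" "set p \<inter> X \<noteq> {}"
  obtains q where "dpath V E q" "hd q \<in> X" "last q = last p" "set (tl q) \<inter> X = {}"
    "set q \<subseteq> set p"
proof -
  obtain ys z zs where p: "p = ys @ z # zs" "z \<in> X" "\<forall>y\<in>set zs. y \<notin> X"
    using split_list_last_prop[of p "\<lambda>x. x \<in> X"] assms(2) by blast
  have "dpath V E (z # zs)"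
    using assms(1) p(1) dpath_append_iff[of ys "z # zs"] by (cases ys) auto
  then show ?thesis
    using p by (intro that[of "z # zs"]) auto
qed

lemma inner_subset: "inner p \<subseteq> set p"
  unfolding inner_def by (cases p) (auto dest: in_set_butlastD)

lemma inner_subset_butlast: "inner p \<subseteq> set (butlast p)"
  unfolding inner_def butlast_tl by (rule set_tl_subset)

lemma last_notin_butlast: "distinct p \<Longrightarrow> last p \<notin> set (butlast p)"
  by (induction p) (auto dest: in_set_butlastD)

lemma last_notin_inner: "distinct p \<Longrightarrow> last p \<notin> inner p"
  unfolding inner_def using last_notin_butlast[of "tl p"] by (cases p) auto

lemma inner_snoc: "q \<noteq> [] \<Longrightarrow> inner (q @ [w]) = set (tl q)"
  unfolding inner_def by (cases q) auto

lemma last_edge_snoc: "q \<noteq> [] \<Longrightarrow> last_edge (q @ [w]) = (last q, w)"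
  unfolding last_edge_def by (simp add: nth_append last_conv_nth)

lemma in_butlast_path_edge: "a \<in> set (butlast p) \<Longrightarrow> \<exists>b. (a, b) \<in> path_edges p"
  by (induction p rule: induct_list012) auto

lemma dpath_split_at_edge:
  assumes "dpath V E P" "(u, v) \<in> path_edges P"
  obtains Q R where "dpath V E Q" "hd Q = hd P" "last Q = v" "last_edge Q = (u, v)" "2 \<le> length Q"
    "set Q \<subseteq> set P" "hd P \<noteq> v" "dpath V E R" "hd R = v" "last R = last P" "u \<notin> set R"
    "set R \<subseteq> set P" "set (butlast R) \<subseteq> set (butlast P)"
proof -
  obtain xs ys where P: "P = xs @ u # v # ys"
    using assms(2) path_edges_iff_split by metis
  have "distinct P"
    using assms(1) by (simp add: dpath_def)
  have "dpath V E (xs @ [u, v])"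
    using assms(1) P dpath_append_iff[of "xs @ [u, v]" ys] by (cases "ys = []") auto
  moreover have "dpath V E (v # ys)"
    using assms(1) P dpath_append_iff[of "xs @ [u]" "v # ys"] by auto
  moreover have "last_edge (xs @ [u, v]) = (u, v)"
    using last_edge_snoc[of "xs @ [u]" v] by simp
  moreover have "hd (xs @ [u, v]) = hd P" "hd P \<noteq> v"
    using P \<open>distinct P\<close> by (cases xs; simp)+
  moreover have "set (butlast (v # ys)) \<subseteq> set (butlast P)"
    using P by (cases ys) (auto simp: butlast_append)
  ultimately show ?thesis
    using that[of "xs @ [u, v]" "v # ys"] P \<open>distinct P\<close> by auto
qed


section \<open>Separators\<close>

definition reaches_avoiding :: "('a \<times> 'a) set \<Rightarrow> 'a set \<Rightarrow> 'a \<Rightarrow> 'a \<Rightarrow> bool" where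
  "reaches_avoiding E X a b \<longleftrightarrow> a \<notin> X \<and> (a, b) \<in> (Restr E (-X))\<^sup>*"

definition separates :: "('a \<times> 'a) set \<Rightarrow> 'a set \<Rightarrow> 'a set \<Rightarrow> 'a set \<Rightarrow> bool" where
  "separates E X A B \<longleftrightarrow> (\<forall>a\<in>A. \<forall>b\<in>B. \<not> reaches_avoiding E X a b)"

lemma reaches_avoiding_refl: "a \<notin> X \<Longrightarrow> reaches_avoiding E X a a"
  by (simp add: reaches_avoiding_def)

lemma reaches_avoiding_trans:
  "reaches_avoiding E X a b \<Longrightarrow> reaches_avoiding E X b c \<Longrightarrow> reaches_avoiding E X a c"
  unfolding reaches_avoiding_def by auto

lemma reaches_avoiding_target:
  assumes "reaches_avoiding E X a b"
  shows "b \<notin> X"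
proof -
  have "(a, b) \<in> (Restr E (-X))\<^sup>*" "a \<notin> X"
    using assms by (auto simp: reaches_avoiding_def)
  then show ?thesis
    by (induction rule: rtrancl_induct) auto
qed

lemma reaches_avoiding_step:
  assumes "reaches_avoiding E X a b" "(b, c) \<in> E" "c \<notin> X"
  shows "reaches_avoiding E X a c"
  using assms reaches_avoiding_target[OF assms(1)]
  by (auto simp: reaches_avoiding_def intro: rtrancl_into_rtrancl)

lemma reaches_avoiding_mono:
  assumes "reaches_avoiding E X a b" "Restr E (-X) \<subseteq> E'" "X' \<subseteq> X"
  shows "reaches_avoiding E' X' a b"
proof -
  have "(Restr E (-X))\<^sup>* \<subseteq> (Restr E' (-X'))\<^sup>*"
    using assms(2,3) by (intro rtrancl_mono) auto
  then show ?thesis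
    using assms(1,3) unfolding reaches_avoiding_def by auto
qed

lemma reaches_avoiding_converse:
  "reaches_avoiding (E\<inverse>) X b a \<longleftrightarrow> reaches_avoiding E X a b"
proof -
  have "Restr (E\<inverse>) (-X) = (Restr E (-X))\<inverse>"
    by auto
  then show ?thesis
    by (metis reaches_avoiding_def reaches_avoiding_target rtrancl_converse converse_iff)
qed

lemma separates_converse: "separates (E\<inverse>) X B A \<longleftrightarrow> separates E X A B"
  by (auto simp: separates_def reaches_avoiding_converse)

lemma path_reaches_avoiding:
  assumes "p \<noteq> []" "path_edges p \<subseteq> E" "set p \<inter> X = {}"
  shows "reaches_avoiding E X (hd p) (last p)"
proof -
  have "path_edges p \<subseteq> Restr E (-X)"
    using assms path_edges_subset_set[of p] by auto
  then have "(hd p, last p) \<in> (Restr E (-X))\<^sup>*"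
    using rtrancl_path_edges[OF assms(1)] rtrancl_mono by blast
  then show ?thesis
    using assms(1,3) by (simp add: reaches_avoiding_def disjoint_iff)
qed

lemma reaches_avoiding_first_hit:
  assumes "reaches_avoiding E X a b" "x \<in> W"
  shows "reaches_avoiding E (X \<union> W) a b \<or> (\<exists>s\<in>W. reaches_avoiding (E - {(x, y)}) X a s)"
proof -
  have "(a, b) \<in> (Restr E (-X))\<^sup>*" "a \<notin> X"
    using assms(1) by (auto simp: reaches_avoiding_def)
  then show ?thesis
  proof (induction rule: rtrancl_induct)
    case base
    then show ?case
      by (cases "a \<in> W") (auto intro: reaches_avoiding_refl)
  next
    case (step c b)
    show ?case
    proof (cases "reaches_avoiding E (X \<union> W) a c")
      case reach: True
      have "c \<notin> W"
        using reaches_avoiding_target[OF reach] by simp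
      show ?thesis
      proof (cases "b \<in> W")
        case True
        have "reaches_avoiding (E - {(x, y)}) X a c"
          using reach by (rule reaches_avoiding_mono) (use assms(2) in auto)
        then have "reaches_avoiding (E - {(x, y)}) X a b"
          by (rule reaches_avoiding_step) (use step.hyps(2) \<open>c \<notin> W\<close> assms(2) in auto)
        then show ?thesis
          using True by blast
      next
        case False
        then show ?thesis
          using reaches_avoiding_step[OF reach] step.hyps(2) by blast
      qed
    qed (use step.IH step.prems in blast)
  qed
qed

lemma separates_insert_endpoint:
  assumes "separates (E - {(x, y)}) S A B" "z \<in> {x, y}"
  shows "separates E (insert z S) A B"
  unfolding separates_def
proof (intro ballI notI)
  fix a b
  assume "a \<in> A" "b \<in> B" "reaches_avoiding E (insert z S) a b"
  have "reaches_avoiding (E - {(x, y)}) S a b"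
    using \<open>reaches_avoiding E (insert z S) a b\<close>
    by (rule reaches_avoiding_mono) (use assms(2) in auto)
  then show False
    using assms(1) \<open>a \<in> A\<close> \<open>b \<in> B\<close> by (auto simp: separates_def)
qed

lemma separates_through_tail:
  assumes "separates (E - {(x, y)}) S A B" "separates (E - {(x, y)}) X A (insert x S)"
  shows "separates E X A B"
  unfolding separates_def
proof (intro ballI notI)
  fix a b
  assume "a \<in> A" "b \<in> B" "reaches_avoiding E X a b"
  then have "reaches_avoiding E (X \<union> insert x S) a b \<or>
      (\<exists>s\<in>insert x S. reaches_avoiding (E - {(x, y)}) X a s)"
    by (intro reaches_avoiding_first_hit) auto
  then show False
  proof (elim disjE bexE)
    assume "reaches_avoiding E (X \<union> insert x S) a b"
    then have "reaches_avoiding E (insert x S) a b"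
      by (rule reaches_avoiding_mono) auto
    then show False
      using separates_insert_endpoint[OF assms(1), of x] \<open>a \<in> A\<close> \<open>b \<in> B\<close>
      by (auto simp: separates_def)
  next
    fix s
    assume "s \<in> insert x S" "reaches_avoiding (E - {(x, y)}) X a s"
    then show False
      using assms(2) \<open>a \<in> A\<close> unfolding separates_def by blast
  qed
qed

lemma separates_through_head:
  assumes "separates (E - {(x, y)}) S A B" "separates (E - {(x, y)}) X (insert y S) B"
  shows "separates E X A B"
proof -
  have converse_Diff: "E\<inverse> - {(y, x)} = (E - {(x, y)})\<inverse>"
    by auto
  have "separates (E\<inverse>) X B A"
  proof (rule separates_through_tail)
    show "separates (E\<inverse> - {(y, x)}) S B A"
      unfolding converse_Diff separates_converse by (rule assms(1))
    show "separates (E\<inverse> - {(y, x)}) X B (insert y S)"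
      unfolding converse_Diff separates_converse by (rule assms(2))
  qed
  then show ?thesis
    by (simp add: separates_converse)
qed

section \<open>Menger's theorem\<close>

definition disjoint_paths ::
  "'a set \<Rightarrow> ('a \<times> 'a) set \<Rightarrow> 'a set \<Rightarrow> 'a set \<Rightarrow> 'a list set \<Rightarrow> bool" where
  "disjoint_paths V E A B P \<longleftrightarrow>
     (\<forall>p\<in>P. dpath V E p \<and> hd p \<in> A \<and> last p \<in> B) \<and>
     (\<forall>p\<in>P. \<forall>q\<in>P. p \<noteq> q \<longrightarrow> set p \<inter> set q = {})"

lemma inj_on_vertex_choice:
  assumes "\<And>p. p \<in> P \<Longrightarrow> f p \<in> set p \<inter> X"
    and "\<And>p q. p \<in> P \<Longrightarrow> q \<in> P \<Longrightarrow> p \<noteq> q \<Longrightarrow> set p \<inter> set q \<inter> X = {}"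
  shows "inj_on f P"
proof (rule inj_onI)
  fix p q
  assume "p \<in> P" "q \<in> P" "f p = f q"
  then have "f p \<in> set p \<inter> set q \<inter> X"
    using assms(1)[of p] assms(1)[of q] by auto
  then show "p = q"
    using assms(2) \<open>p \<in> P\<close> \<open>q \<in> P\<close> by blast
qed

lemma disjoint_paths_inj_on:
  assumes "disjoint_paths V E A B P" "\<And>p. p \<in> P \<Longrightarrow> f p \<in> set p"
  shows "inj_on f P"
  using assms by (intro inj_on_vertex_choice[where X = UNIV]) (auto simp: disjoint_paths_def)

lemma disjoint_paths_mono:
  "disjoint_paths V E A B P \<Longrightarrow> E \<subseteq> E' \<Longrightarrow> disjoint_paths V E' A B P"
  unfolding disjoint_paths_def using dpath_mono[of V E _ V E'] by blast

lemma dpath_tighten: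
  assumes "dpath V E p" "hd p \<in> A" "last p \<in> B"
  obtains q where "dpath V E q" "hd q \<in> A" "last q \<in> B" "set (tl q) \<inter> A = {}"
    "set (butlast q) \<inter> B = {}" "set q \<subseteq> set p"
proof -
  have "p \<noteq> []"
    using assms(1) by (simp add: dpath_def)
  moreover have "hd p \<in> set p \<inter> A"
    using assms(2) \<open>p \<noteq> []\<close> by simp
  ultimately obtain q1 where q1: "dpath V E q1" "hd q1 \<in> A" "last q1 = last p"
    "set (tl q1) \<inter> A = {}" "set q1 \<subseteq> set p"
    using dpath_last_hit[OF assms(1), of A] by blast
  have "q1 \<noteq> []"
    using q1(1) by (simp add: dpath_def)
  moreover have "last q1 \<in> set q1 \<inter> B"
    using q1(3) assms(3) \<open>q1 \<noteq> []\<close> last_in_set by fastforce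
  ultimately obtain q where q: "dpath V E q" "hd q = hd q1" "last q \<in> B"
    "set (butlast q) \<inter> B = {}" "set q \<subseteq> set q1"
    using dpath_first_hit[OF q1(1), of B] by blast
  have "set (tl q) \<subseteq> set (tl q1)"
  proof -
    have "q \<noteq> []" "distinct q"
      using q(1) by (auto simp: dpath_def)
    then have "hd q1 \<notin> set (tl q)"
      using q(2) by (cases q) auto
    then show ?thesis
      using q(5) set_hd_tl[OF \<open>q1 \<noteq> []\<close>] \<open>q \<noteq> []\<close> list.set_sel(2) by fastforce
  qed
  then show ?thesis
    using q q1 by (intro that[of q]) auto
qed

lemma disjoint_paths_tighten:
  assumes "disjoint_paths V E A B P"
  obtains P' where "disjoint_paths V E A B P'" "card P' = card P"
    "\<forall>p\<in>P'. set (tl p) \<inter> A = {} \<and> set (butlast p) \<inter> B = {}"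
proof -
  obtain f where f: "\<And>p. p \<in> P \<Longrightarrow> dpath V E (f p) \<and> hd (f p) \<in> A \<and> last (f p) \<in> B \<and>
      set (tl (f p)) \<inter> A = {} \<and> set (butlast (f p)) \<inter> B = {} \<and> set (f p) \<subseteq> set p"
    using dpath_tighten assms unfolding disjoint_paths_def by metis
  have "inj_on (hd \<circ> f) P"
  proof (rule disjoint_paths_inj_on[OF assms])
    fix p
    assume "p \<in> P"
    then have "f p \<noteq> []" "set (f p) \<subseteq> set p"
      using f[of p] by (auto simp: dpath_def)
    then show "(hd \<circ> f) p \<in> set p"
      by auto
  qed
  then have "card (f ` P) = card P"
    using card_image inj_on_imageI2 by blast
  moreover have "disjoint_paths V E A B (f ` P)"
    using assms f unfolding disjoint_paths_def by fast
  ultimately show ?thesis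
    using f by (intro that[of "f ` P"]) auto
qed

lemma paths_meet_in_separator:
  assumes "separates E S A B"
    and p: "dpath V E p" "hd p \<in> A" "set (butlast p) \<inter> S = {}"
    and q: "dpath V E q" "last q \<in> B" "set (tl q) \<inter> S = {}"
    and z: "z \<in> set p" "z \<in> set q"
  shows "z \<in> S \<and> z = last p \<and> z = hd q"
proof -
  have "z \<in> S"
  proof (rule ccontr)
    assume "z \<notin> S"
    obtain p1 p2 where p12: "p = p1 @ z # p2"
      using split_list[OF z(1)] by blast
    obtain q1 q2 where q12: "q = q1 @ z # q2"
      using split_list[OF z(2)] by blast
    have "set p1 \<subseteq> set (butlast p)" "set q2 \<subseteq> set (tl q)"
      using p12 q12 by (auto simp: butlast_append) (cases q1; auto)
    then have "set (p1 @ [z]) \<inter> S = {}" "set (z # q2) \<inter> S = {}"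
      using p(3) q(3) \<open>z \<notin> S\<close> by auto
    moreover have "path_edges (p1 @ [z]) \<subseteq> E" "path_edges (z # q2) \<subseteq> E"
      using p(1) q(1) p12 q12 path_edges_append_subset[of "p1 @ [z]" p2]
        path_edges_append_subset[of q1 "z # q2"]
      by (auto simp: dpath_iff_path_edges)
    ultimately have "reaches_avoiding E S (hd (p1 @ [z])) z" "reaches_avoiding E S z (last (z # q2))"
      using path_reaches_avoiding[of "p1 @ [z]"] path_reaches_avoiding[of "z # q2"] by auto
    moreover have "hd (p1 @ [z]) = hd p"
      using p12 by (cases p1) auto
    moreover have "last (z # q2) = last q"
      using q12 by simp
    ultimately have "reaches_avoiding E S (hd p) (last q)"
      using reaches_avoiding_trans by metis
    then show False
      using assms(1) p(2) q(2) by (auto simp: separates_def)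
  qed
  moreover have "p \<noteq> []" "q \<noteq> []"
    using p(1) q(1) by (auto simp: dpath_def)
  ultimately show ?thesis
    using z p(3) q(3) set_butlast_last[of p] set_hd_tl[of q] by auto
qed

lemma join_disjoint_paths:
  assumes P: "disjoint_paths V E A T P" and Q: "disjoint_paths V E T' B Q"
    and "last ` P \<subseteq> hd ` Q"
    and meet: "\<And>p q z. p \<in> P \<Longrightarrow> q \<in> Q \<Longrightarrow> z \<in> set p \<Longrightarrow> z \<in> set q \<Longrightarrow> z = last p \<and> z = hd q"
  shows "\<exists>R. disjoint_paths V E A B R \<and> card R = card P"
proof -
  have "\<forall>p\<in>P. \<exists>q\<in>Q. hd q = last p"
    using assms(3) by fastforce
  then obtain g where g: "\<And>p. p \<in> P \<Longrightarrow> g p \<in> Q \<and> hd (g p) = last p"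
    by metis
  define join where "join p = p @ tl (g p)" for p
  have ne: "p \<noteq> []" "g p \<noteq> []" if "p \<in> P" for p
    using P Q g[OF that] that by (auto simp: disjoint_paths_def dpath_def)
  have join_path: "dpath V E (join p) \<and> hd (join p) \<in> A \<and> last (join p) \<in> B" if "p \<in> P" for p
  proof -
    have "set p \<inter> set (g p) \<subseteq> {hd (g p)}"
      using meet[OF that] g[OF that] by blast
    then have "dpath V E (join p)"
      unfolding join_def using P Q g[OF that] that
      by (intro dpath_join) (auto simp: disjoint_paths_def)
    moreover have "hd (join p) = hd p" "last (join p) = last (g p)"
      unfolding join_def using ne[OF that] g[OF that] by (auto simp: last_append_tl)
    ultimately show ?thesis
      using P Q g[OF that] that by (auto simp: disjoint_paths_def)
  qed
  have cross: "set p \<inter> set (g p') = {}" if "p \<in> P" "p' \<in> P" "p \<noteq> p'" for p p'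
  proof -
    have "z \<in> set p'" if "z \<in> set p" "z \<in> set (g p')" for z
      using meet[OF \<open>p \<in> P\<close> _ that] g[OF \<open>p' \<in> P\<close>] ne[OF \<open>p' \<in> P\<close>] last_in_set
      by fastforce
    then show ?thesis
      using P that unfolding disjoint_paths_def by blast
  qed
  have join_disjoint: "set (join p) \<inter> set (join p') = {}" if "p \<in> P" "p' \<in> P" "p \<noteq> p'" for p p'
  proof -
    have "set p \<inter> set p' = {}"
      using P that by (auto simp: disjoint_paths_def)
    moreover have "last p \<in> set p" "last p' \<in> set p'"
      using ne that by auto
    ultimately have "last p \<noteq> last p'"
      by auto
    then have "g p \<noteq> g p'"
      using g[OF that(1)] g[OF that(2)] by auto
    then have "set (g p) \<inter> set (g p') = {}"
      using Q g[OF that(1)] g[OF that(2)] by (simp add: disjoint_paths_def)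
    moreover have "set (join p) \<subseteq> set p \<union> set (g p)" "set (join p') \<subseteq> set p' \<union> set (g p')"
      unfolding join_def using set_tl_subset by fastforce+
    ultimately show ?thesis
      using \<open>set p \<inter> set p' = {}\<close> cross[OF that] cross[OF that(2,1)] by blast
  qed
  have "inj_on join P"
  proof (rule inj_onI)
    fix p p'
    assume "p \<in> P" "p' \<in> P" "join p = join p'"
    moreover have "join p \<noteq> []"
      using join_path[OF \<open>p \<in> P\<close>] by (simp add: dpath_def)
    ultimately show "p = p'"
      using join_disjoint by fastforce
  qed
  then have "card (join ` P) = card P"
    by (rule card_image)
  moreover have "disjoint_paths V E A B (join ` P)"
    using join_path join_disjoint unfolding disjoint_paths_def by blast
  ultimately show ?thesis
    by blast
qed

lemma disjoint_paths_prepend: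
  assumes "disjoint_paths V E T B Q" "q \<in> Q" "x \<in> V" "(x, hd q) \<in> E" "\<forall>q\<in>Q. x \<notin> set q"
  shows "disjoint_paths V E (insert x T) B (insert (x # q) (Q - {q}))"
proof -
  have "dpath V E q" "last q \<in> B"
    using assms(1,2) by (auto simp: disjoint_paths_def)
  moreover have "q \<noteq> []"
    using \<open>dpath V E q\<close> by (simp add: dpath_def)
  ultimately have "dpath V E (x # q)" "last (x # q) \<in> B"
    using assms(2-5) by (auto simp: dpath_Cons)
  then show ?thesis
    unfolding disjoint_paths_def
  proof (intro conjI)
    show "\<forall>p\<in>insert (x # q) (Q - {q}). dpath V E p \<and> hd p \<in> insert x T \<and> last p \<in> B"
      using assms(1) \<open>dpath V E (x # q)\<close> \<open>last (x # q) \<in> B\<close> unfolding disjoint_paths_def by simp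
    have "set (x # q) \<inter> set p = {}" if "p \<in> Q - {q}" for p
    proof -
      have "set q \<inter> set p = {}" "x \<notin> set p"
        using assms(1,2,5) that unfolding disjoint_paths_def by blast+
      then show ?thesis
        by simp
    qed
    then show "\<forall>p\<in>insert (x # q) (Q - {q}). \<forall>p'\<in>insert (x # q) (Q - {q}).
        p \<noteq> p' \<longrightarrow> set p \<inter> set p' = {}"
      using assms(1) unfolding disjoint_paths_def by blast
  qed
qed

lemma disjoint_paths_choice_image:
  assumes "disjoint_paths V E A B P" "\<And>p. p \<in> P \<Longrightarrow> f p \<in> set p \<inter> C"
    and "finite C" "card C \<le> card P"
  shows "f ` P = C"
proof (rule card_subset_eq)
  have "inj_on f P"
    using assms(2) by (intro disjoint_paths_inj_on[OF assms(1)]) blast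
  then show "card (f ` P) = card C"
    using assms(2-4) card_image card_mono[of C "f ` P"] by fastforce
qed (use assms(2,3) in blast)+

(* The path ending at x is carried across the deleted edge by x # qy; every other path ending
   in S is joined to the path starting at the same vertex. *)
lemma disjoint_paths_glue_at_edge:
  assumes "(x, y) \<in> E"
    and S: "separates (E - {(x, y)}) S A B" "finite S" "x \<notin> S" "y \<notin> S"
    and P: "disjoint_paths V (E - {(x, y)}) A (insert x S) P" "card P = Suc (card S)"
      "\<forall>p\<in>P. set (butlast p) \<inter> insert x S = {}"
    and Q: "disjoint_paths V (E - {(x, y)}) (insert y S) B Q" "card Q = Suc (card S)"
      "\<forall>q\<in>Q. set (tl q) \<inter> insert y S = {}"
  shows "\<exists>R. disjoint_paths V E A B R \<and> card R = Suc (card S)"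
proof -
  have meet: "z \<in> S \<and> z = last p \<and> z = hd q" if "p \<in> P" "q \<in> Q" "z \<in> set p" "z \<in> set q" for p q z
  proof (rule paths_meet_in_separator[OF S(1)])
    show "dpath V (E - {(x, y)}) p" "hd p \<in> A" "dpath V (E - {(x, y)}) q" "last q \<in> B"
      using P(1) Q(1) that(1,2) by (auto simp: disjoint_paths_def)
    show "set (butlast p) \<inter> S = {}" "set (tl q) \<inter> S = {}"
      using P(3) Q(3) that(1,2) by auto
  qed (use that in auto)
  have "last ` P = insert x S"
    using P(1,2) S(2,3) by (intro disjoint_paths_choice_image[OF P(1)])
      (auto simp: disjoint_paths_def dpath_def)
  then obtain px where px: "px \<in> P" "last px = x"
    by (metis imageE insertI1)
  have "hd ` Q = insert y S"
    using Q(1,2) S(2,4) by (intro disjoint_paths_choice_image[OF Q(1)])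
      (auto simp: disjoint_paths_def dpath_def)
  then obtain qy where qy: "qy \<in> Q" "hd qy = y"
    by (metis imageE insertI1)
  have "x \<in> set px" "set px \<subseteq> V"
    using P(1) px by (auto simp: disjoint_paths_def dpath_def)
  then have x_notin_Q: "\<forall>q\<in>Q. x \<notin> set q" "x \<in> V"
    using meet[OF px(1)] S(3) by auto
  define Q' where "Q' = insert (x # qy) (Q - {qy})"
  have "disjoint_paths V E (insert x (insert y S)) B Q'"
    unfolding Q'_def
    using disjoint_paths_mono[OF Q(1)] qy assms(1) x_notin_Q
    by (intro disjoint_paths_prepend) auto
  moreover have "last ` P \<subseteq> hd ` Q'"
  proof -
    have "S \<subseteq> hd ` (Q - {qy})"
      using \<open>hd ` Q = insert y S\<close> qy(2) S(4) by auto
    then show ?thesis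
      using \<open>last ` P = insert x S\<close> unfolding Q'_def by auto
  qed
  moreover have "z = last p \<and> z = hd q"
    if "p \<in> P" "q \<in> Q'" "z \<in> set p" "z \<in> set q" for p q z
  proof (cases "q = x # qy")
    case True
    show ?thesis
    proof (cases "z = x")
      case True
      then have "set p \<inter> set px \<noteq> {}"
        using \<open>x \<in> set px\<close> that(3) by auto
      then have "p = px"
        using P(1) px(1) that(1) unfolding disjoint_paths_def by blast
      then show ?thesis
        using True \<open>q = x # qy\<close> px(2) by simp
    next
      case False
      then show ?thesis
        using meet[OF that(1) qy(1) that(3)] \<open>q = x # qy\<close> that(4) qy(2) S(4) by auto
    qed
  next
    case False
    then show ?thesis
      using meet[OF that(1) _ that(3,4)] that(2) unfolding Q'_def by auto
  qed
  ultimately have "\<exists>R. disjoint_paths V E A B R \<and> card R = card P"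
    by (intro join_disjoint_paths[OF disjoint_paths_mono[OF P(1)]]) auto
  then show ?thesis
    using P(2) by simp
qed

lemma menger_no_edges:
  assumes "A \<subseteq> V" "\<And>X. X \<subseteq> V \<Longrightarrow> separates {} X A B \<Longrightarrow> k \<le> card X"
  shows "\<exists>P. disjoint_paths V {} A B P \<and> card P = k"
proof -
  have "separates {} (A \<inter> B) A B"
    by (auto simp: separates_def reaches_avoiding_def)
  then have "k \<le> card (A \<inter> B)"
    using assms by blast
  then obtain C where C: "C \<subseteq> A \<inter> B" "card C = k"
    by (meson obtain_subset_with_card_n)
  have "disjoint_paths V {} A B ((\<lambda>a. [a]) ` C)"
    using C(1) assms(1) by (auto simp: disjoint_paths_def dpath_def)
  moreover have "card ((\<lambda>a. [a]) ` C) = k"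
    using C(2) card_image[of "\<lambda>a. [a]" C] by (simp add: inj_on_def)
  ultimately show ?thesis
    by blast
qed

theorem menger:
  assumes "finite V" "E \<subseteq> V \<times> V" "A \<subseteq> V" "B \<subseteq> V"
    and "\<And>X. X \<subseteq> V \<Longrightarrow> separates E X A B \<Longrightarrow> k \<le> card X"
  shows "\<exists>P. disjoint_paths V E A B P \<and> card P = k"
  using assms(2-)
proof (induction "card E" arbitrary: E A B k rule: less_induct)
  case less
  show ?case
  proof (cases "E = {}")
    case True
    then show ?thesis
      using menger_no_edges less.prems(2,4) by metis
  next
    case False
    then obtain x y where e: "(x, y) \<in> E"
      by auto
    let ?E' = "E - {(x, y)}"
    have "finite E"
      using assms(1) less.prems(1) finite_subset by blast
    then have smaller: "card ?E' < card E"
      using e by (rule card_Diff1_less)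
    have E'V: "?E' \<subseteq> V \<times> V"
      using less.prems(1) by auto
    show ?thesis
    proof (cases "\<forall>X. X \<subseteq> V \<longrightarrow> separates ?E' X A B \<longrightarrow> k \<le> card X")
      case True
      then show ?thesis
        using less.hyps[OF smaller E'V less.prems(2,3)] disjoint_paths_mono[of V ?E' A B _ E] by blast
    next
      case False
      then obtain S where S: "S \<subseteq> V" "separates ?E' S A B" "card S < k"
        by (auto simp: not_le)
      have "finite S"
        using S(1) assms(1) finite_subset by blast
      have "x \<in> V" "y \<in> V"
        using e less.prems(1) by auto
      then have "k \<le> card (insert x S)" "k \<le> card (insert y S)"
        using less.prems(4) separates_insert_endpoint[OF S(2)] S(1) by auto
      then have xy: "x \<notin> S" "y \<notin> S" and k: "k = Suc (card S)"
        using S(3) \<open>finite S\<close> by (auto simp: insert_absorb card_insert_if split: if_splits)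
      obtain P where P: "disjoint_paths V ?E' A (insert x S) P" "card P = k"
        using less.hyps[OF smaller E'V less.prems(2), of "insert x S" k] S(1) \<open>x \<in> V\<close>
          separates_through_tail[OF S(2)] less.prems(4) by blast
      then obtain P' where P': "disjoint_paths V ?E' A (insert x S) P'" "card P' = k"
        "\<forall>p\<in>P'. set (butlast p) \<inter> insert x S = {}"
        by (metis disjoint_paths_tighten)
      obtain Q where Q: "disjoint_paths V ?E' (insert y S) B Q" "card Q = k"
        using less.hyps[OF smaller E'V _ less.prems(3), of "insert y S" k] S(1) \<open>y \<in> V\<close>
          separates_through_head[OF S(2)] less.prems(4) by blast
      then obtain Q' where Q': "disjoint_paths V ?E' (insert y S) B Q'" "card Q' = k"
        "\<forall>q\<in>Q'. set (tl q) \<inter> insert y S = {}"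
        by (metis disjoint_paths_tighten)
      show ?thesis
        using disjoint_paths_glue_at_edge[OF e S(2) \<open>finite S\<close> xy P'[unfolded k] Q'[unfolded k]] k
        by simp
    qed
  qed
qed

definition fan :: "'a set \<Rightarrow> ('a \<times> 'a) set \<Rightarrow> 'a \<Rightarrow> 'a set \<Rightarrow> 'a list set \<Rightarrow> bool" where
  "fan V E r Y L \<longleftrightarrow>
     (\<forall>p\<in>L. dpath V E p \<and> hd p = r \<and> last p \<in> Y) \<and>
     (\<forall>p\<in>L. \<forall>q\<in>L. p \<noteq> q \<longrightarrow> set p \<inter> set q \<subseteq> {r}) \<and> last ` L = Y"

lemma rtrancl_last_departure:
  assumes "(r, y) \<in> R\<^sup>*" "y \<noteq> r"
  shows "\<exists>a. (r, a) \<in> R \<and> a \<noteq> r \<and> (a, y) \<in> (Restr R (-{r}))\<^sup>*"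
  using assms
proof (induction rule: rtrancl_induct)
  case (step c b)
  show ?case
  proof (cases "c = r")
    case False
    then obtain a where "(r, a) \<in> R" "a \<noteq> r" "(a, c) \<in> (Restr R (-{r}))\<^sup>*"
      using step.IH by blast
    moreover have "(c, b) \<in> Restr R (-{r})"
      using step.hyps(2) step.prems False by auto
    ultimately show ?thesis
      by (meson rtrancl_into_rtrancl)
  qed (use step in auto)
qed simp

lemma separates_root_of_out_neighbours:
  assumes "E \<subseteq> V \<times> V" "Y \<subseteq> V - {r}"
    and "separates (Restr E (V - {r})) X {a \<in> V - {r}. (r, a) \<in> E} Y"
  shows "separates E X {r} Y"
  unfolding separates_def
proof (intro ballI notI)
  fix r' y
  assume "r' \<in> {r}" "y \<in> Y" "reaches_avoiding E X r' y"
  then have "(r, y) \<in> (Restr E (-X))\<^sup>*" "r \<notin> X" "y \<noteq> r"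
    using assms(2) by (auto simp: reaches_avoiding_def)
  then obtain a where a: "(r, a) \<in> Restr E (-X)" "a \<noteq> r"
    "(a, y) \<in> (Restr (Restr E (-X)) (-{r}))\<^sup>*"
    using rtrancl_last_departure by metis
  have "reaches_avoiding (Restr E (V - {r})) X a y"
    unfolding reaches_avoiding_def
  proof
    show "a \<notin> X"
      using a(1) by auto
    have "Restr (Restr E (-X)) (-{r}) \<subseteq> Restr (Restr E (V - {r})) (-X)"
      using assms(1) by auto
    then show "(a, y) \<in> (Restr (Restr E (V - {r})) (-X))\<^sup>*"
      using a(3) rtrancl_mono by blast
  qed
  moreover have "a \<in> {a \<in> V - {r}. (r, a) \<in> E}"
    using a(1,2) assms(1) by auto
  ultimately show False
    using assms(3) \<open>y \<in> Y\<close> by (auto simp: separates_def)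
qed

theorem fan_menger:
  assumes "finite V" "E \<subseteq> V \<times> V" "r \<in> V" "Y \<subseteq> V - {r}"
    and "\<And>Z. Z \<subseteq> V - {r} \<Longrightarrow> separates E Z {r} Y \<Longrightarrow> card Y \<le> card Z"
  shows "\<exists>L. fan V E r Y L"
proof -
  define A where "A = {a \<in> V - {r}. (r, a) \<in> E}"
  have "separates E X {r} Y" if "separates (Restr E (V - {r})) X A Y" for X
    using separates_root_of_out_neighbours[OF assms(2,4)] that unfolding A_def by blast
  then obtain P where P: "disjoint_paths (V - {r}) (Restr E (V - {r})) A Y P" "card P = card Y"
    using menger[of "V - {r}" "Restr E (V - {r})" A Y "card Y"] assms unfolding A_def by auto
  have "fan V E r Y (Cons r ` P)"
    unfolding fan_def
  proof (intro conjI)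
    show "\<forall>p'\<in>Cons r ` P. dpath V E p' \<and> hd p' = r \<and> last p' \<in> Y"
    proof
      fix p'
      assume "p' \<in> Cons r ` P"
      then obtain p where p: "p' = r # p" "p \<in> P"
        by auto
      then have "dpath (V - {r}) (Restr E (V - {r})) p" "hd p \<in> A" "last p \<in> Y"
        using P(1) by (auto simp: disjoint_paths_def)
      moreover have "dpath V E p" "p \<noteq> []" "r \<notin> set p"
        using dpath_mono[OF \<open>dpath (V - {r}) (Restr E (V - {r})) p\<close>, of V E]
          \<open>dpath (V - {r}) (Restr E (V - {r})) p\<close> by (auto simp: dpath_def)
      ultimately show "dpath V E p' \<and> hd p' = r \<and> last p' \<in> Y"
        using p assms(3) unfolding A_def by (auto simp: dpath_Cons)
    qed
    show "\<forall>p'\<in>Cons r ` P. \<forall>q'\<in>Cons r ` P. p' \<noteq> q' \<longrightarrow> set p' \<inter> set q' \<subseteq> {r}"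
      using P(1) by (auto simp: disjoint_paths_def)
    have "last ` P = Y"
      using P assms(1,4) finite_subset
      by (intro disjoint_paths_choice_image[OF P(1)]) (auto simp: disjoint_paths_def dpath_def)
    moreover have "last (r # p) = last p" if "p \<in> P" for p
      using P(1) that by (auto simp: disjoint_paths_def dpath_def)
    ultimately show "last ` Cons r ` P = Y"
      by (simp add: image_image cong: image_cong)
  qed
  then show ?thesis
    by blast
qed

section \<open>Path systems ending in w\<close>

lemma rw_path_decompose:
  assumes "dpath V E p" "hd p = r" "last p = w" "w \<noteq> r"
  obtains q where "p = q @ [w]" "q \<noteq> []" "dpath V E q" "hd q = r" "w \<notin> set q"
proof -
  have "p \<noteq> []" "distinct p"
    using assms(1) by (auto simp: dpath_def)
  then have p: "p = butlast p @ [w]"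
    using assms(3) append_butlast_last_id[of p] by simp
  moreover have "butlast p \<noteq> []"
    using p assms(2,4) by (cases "butlast p") auto
  moreover from calculation have "dpath V E (butlast p)"
    using assms(1) dpath_append_iff[of "butlast p" "[w]"] by auto
  moreover have "w \<notin> set (butlast p)"
    using last_notin_butlast[OF \<open>distinct p\<close>] assms(3) by simp
  moreover have "hd (butlast p) = r"
    using p \<open>butlast p \<noteq> []\<close> assms(2) by (cases "butlast p") auto
  ultimately show ?thesis
    using that by blast
qed

lemma rw_path_system_of_fan:
  assumes "fan V H r Y L" "H \<subseteq> E" "\<forall>(a, b)\<in>H. a \<noteq> w" "w \<in> V" "\<forall>p\<in>L. (last p, w) \<in> E"
    and "\<forall>x. (x, x) \<notin> E"
  shows "rw_path_system V E r w ((\<lambda>p. p @ [w]) ` L)"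
proof -
  have L: "dpath V E p \<and> p \<noteq> [] \<and> hd p = r \<and> w \<notin> set p \<and> r \<notin> set (tl p)" if "p \<in> L" for p
  proof -
    have p: "dpath V H p" "hd p = r" "p \<noteq> []" "distinct p"
      using assms(1) that unfolding fan_def dpath_def by auto
    have "w \<notin> set (butlast p)"
      using in_butlast_path_edge[of w p] p(1) assms(2,3) by (auto simp: dpath_iff_path_edges)
    moreover have "last p \<noteq> w"
      using assms(5,6) that by auto
    moreover have "r \<notin> set (tl p)"
      using p(2-4) by (cases p) auto
    ultimately show ?thesis
      using p dpath_mono[OF p(1) _ assms(2)] set_butlast_last[of p] by auto
  qed
  have "dpath V E (p @ [w])" if "p \<in> L" for p
    using L[OF that] assms(4,5) that dpath_append_iff[of p "[w]"] by (auto simp: dpath_Cons)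
  moreover have "set (tl p) \<inter> set (tl q) = {}" if "p \<in> L" "q \<in> L" "p \<noteq> q" for p q
  proof -
    have "set p \<inter> set q \<subseteq> {r}"
      using assms(1) that unfolding fan_def by blast
    then show ?thesis
      using L[OF that(1)] set_tl_subset[of p] set_tl_subset[of q] by blast
  qed
  ultimately show ?thesis
    unfolding rw_path_system_def using L by (auto simp: inner_snoc)
qed

lemma rw_path_system_insert_edge:
  assumes "rw_path_system V E r w Ps" "(r, w) \<in> E" "r \<noteq> w" "E \<subseteq> V \<times> V"
  shows "rw_path_system V E r w (insert [r, w] Ps)"
proof -
  have "dpath V E [r, w]" "inner [r, w] = {}"
    using assms(2-4) by (auto simp: dpath_Cons inner_def)
  then show ?thesis
    using assms(1) unfolding rw_path_system_def by auto
qed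

lemma Gset_of_fan:
  assumes "digraph V E" "r \<noteq> w" "fan V H r Y L" "H \<subseteq> E" "\<forall>(a, b)\<in>H. a \<noteq> w"
    and "I \<subseteq> in_edges E w" "fst ` I - {r} \<subseteq> Y"
  shows "I \<in> Gset V E r w"
proof -
  let ?T = "fst ` I - {r}"
  define L' where "L' = {p \<in> L. last p \<in> ?T}"
  have EV: "E \<subseteq> V \<times> V" and loopless: "\<forall>x. (x, x) \<notin> E"
    using assms(1) by (auto simp: digraph_def)
  have "last ` L' = last ` L \<inter> ?T"
    unfolding L'_def by auto
  also have "\<dots> = ?T"
    using assms(3,7) by (simp add: fan_def Int_absorb1)
  finally have last_L': "last ` L' = ?T" .
  have "fan V H r ?T L'"
    using assms(3) last_L' unfolding fan_def L'_def by auto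
  moreover have to_w: "\<forall>p\<in>L'. (last p, w) \<in> E"
    using assms(6) unfolding L'_def by (auto simp: in_edges_def)
  moreover have "w \<in> V" if "L' \<noteq> {}"
    using that to_w EV by blast
  ultimately have "rw_path_system V E r w ((\<lambda>p. p @ [w]) ` L')"
    using rw_path_system_of_fan[OF _ assms(4,5) _ _ loopless]
    by (cases "L' = {}") (auto simp: rw_path_system_def)
  define Ps where "Ps = (\<lambda>p. p @ [w]) ` L' \<union> (if (r, w) \<in> I then {[r, w]} else {})"
  have "rw_path_system V E r w Ps"
    unfolding Ps_def using \<open>rw_path_system V E r w ((\<lambda>p. p @ [w]) ` L')\<close>
      rw_path_system_insert_edge[OF _ _ assms(2) EV] assms(6) by (auto simp: in_edges_def)
  moreover have "last_edge ` Ps = I"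
  proof -
    have "last_edge ` (\<lambda>p. p @ [w]) ` L' = (\<lambda>t. (t, w)) ` last ` L'"
      unfolding image_image using assms(3)
      by (intro image_cong) (auto simp: last_edge_snoc L'_def fan_def dpath_def)
    then have "last_edge ` Ps = (\<lambda>t. (t, w)) ` ?T \<union> (if (r, w) \<in> I then {(r, w)} else {})"
      unfolding Ps_def image_Un last_L' by (simp add: last_edge_def)
    also have "\<dots> = I"
      using assms(6) by (force simp: in_edges_def)
    finally show ?thesis .
  qed
  ultimately show ?thesis
    using assms(6) unfolding Gset_def by blast
qed

lemma butlast_rw_path:
  assumes "dpath V E p" "hd p = r" "last p = w" "w \<noteq> r"
  shows "dpath V E (butlast p)" "hd (butlast p) = r" "last (butlast p) = fst (last_edge p)"
    "set (butlast p) = insert r (inner p)" "w \<notin> set (butlast p)"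
proof -
  obtain q where q: "p = q @ [w]" "q \<noteq> []" "dpath V E q" "hd q = r" "w \<notin> set q"
    using rw_path_decompose[OF assms] .
  then show "dpath V E (butlast p)" "hd (butlast p) = r" "last (butlast p) = fst (last_edge p)"
    "w \<notin> set (butlast p)"
    by (simp_all add: last_edge_snoc)
  show "set (butlast p) = insert r (inner p)"
    using q set_hd_tl[of q] by (simp add: inner_snoc)
qed

lemma rw_path_tail_in_inner:
  assumes "dpath V E p" "hd p = r" "last p = w" "w \<noteq> r" "fst (last_edge p) \<noteq> r"
  shows "fst (last_edge p) \<in> inner p"
proof -
  note bl = butlast_rw_path[OF assms(1-4)]
  have "butlast p \<noteq> []"
    using bl(1) by (simp add: dpath_def)
  then have "fst (last_edge p) \<in> set (butlast p)"
    using bl(3) last_in_set by metis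
  then show ?thesis
    using bl(4) assms(5) by simp
qed

lemma rw_path_system_tail_inj:
  assumes "rw_path_system V E r w Ps" "w \<noteq> r" "p \<in> Ps" "q \<in> Ps"
    and "fst (last_edge p) = fst (last_edge q)" "fst (last_edge p) \<noteq> r"
  shows "p = q"
proof -
  have "dpath V E p" "hd p = r" "last p = w" "dpath V E q" "hd q = r" "last q = w"
    using assms(1,3,4) unfolding rw_path_system_def by auto
  then have "fst (last_edge p) \<in> inner p \<inter> inner q"
    using rw_path_tail_in_inner[of V E p r w] rw_path_tail_in_inner[of V E q r w] assms(2,5,6)
    by simp
  then show ?thesis
    using assms(1,3,4) unfolding rw_path_system_def by blast
qed

lemma fan_of_rw_path_system:
  assumes "rw_path_system V E r w Ps" "w \<noteq> r"
  shows "fan V E r (fst ` last_edge ` Ps - {r}) (butlast ` {p \<in> Ps. fst (last_edge p) \<noteq> r})"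
    (is "fan V E r ?Y (butlast ` ?Ps)")
  unfolding fan_def
proof (intro conjI)
  have bl: "dpath V E (butlast p) \<and> hd (butlast p) = r \<and> last (butlast p) = fst (last_edge p) \<and>
      set (butlast p) = insert r (inner p)" if "p \<in> Ps" for p
  proof -
    have "dpath V E p" "hd p = r" "last p = w"
      using assms(1) that unfolding rw_path_system_def by auto
    from butlast_rw_path[OF this assms(2)] show ?thesis
      by simp
  qed
  show "\<forall>q\<in>butlast ` ?Ps. dpath V E q \<and> hd q = r \<and> last q \<in> ?Y"
    using bl by auto
  show "\<forall>q\<in>butlast ` ?Ps. \<forall>q'\<in>butlast ` ?Ps. q \<noteq> q' \<longrightarrow> set q \<inter> set q' \<subseteq> {r}"
  proof (intro ballI impI)
    fix q q'
    assume "q \<in> butlast ` ?Ps" "q' \<in> butlast ` ?Ps" "q \<noteq> q'"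
    then obtain p p' where "p \<in> Ps" "q = butlast p" "p' \<in> Ps" "q' = butlast p'" "p \<noteq> p'"
      by blast
    then have "inner p \<inter> inner p' = {}" "set q = insert r (inner p)" "set q' = insert r (inner p')"
      using assms(1) bl unfolding rw_path_system_def by auto
    then show "set q \<inter> set q' \<subseteq> {r}"
      by auto
  qed
  have "last ` butlast ` ?Ps = fst ` last_edge ` ?Ps"
    unfolding image_image using bl by (intro image_cong) auto
  then show "last ` butlast ` ?Ps = ?Y"
    by auto
qed

lemma fan_insert:
  assumes "fan V E r Y L" "dpath V E p" "hd p = r" "\<forall>q\<in>L. set p \<inter> set q \<subseteq> {r}"
  shows "fan V E r (insert (last p) Y) (insert p L)"
  unfolding fan_def
proof (intro conjI)
  show "\<forall>q\<in>insert p L. dpath V E q \<and> hd q = r \<and> last q \<in> insert (last p) Y"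
    using assms unfolding fan_def by simp
  show "\<forall>q\<in>insert p L. \<forall>q'\<in>insert p L. q \<noteq> q' \<longrightarrow> set q \<inter> set q' \<subseteq> {r}"
    using assms(1,4) unfolding fan_def by blast
  show "last ` insert p L = insert (last p) Y"
    using assms(1) by (simp add: fan_def)
qed

lemma rw_path_system_meets_butlast:
  assumes "rw_path_system V E r w Ps" "w \<noteq> r" "p \<in> Ps" "q \<in> Ps" "p \<noteq> q"
  shows "set p \<inter> set (butlast q) \<subseteq> {r}"
proof -
  have "dpath V E p" "hd p = r" "last p = w" "dpath V E q" "hd q = r" "last q = w"
    using assms(1,3,4) unfolding rw_path_system_def by auto
  note bp = butlast_rw_path[OF this(1-3) assms(2)] and bq = butlast_rw_path[OF this(4-6) assms(2)]
  have "p \<noteq> []"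
    using \<open>dpath V E p\<close> by (simp add: dpath_def)
  then have "set p = insert w (insert r (inner p))"
    using set_butlast_last[of p] bp(4) \<open>last p = w\<close> by simp
  moreover have "inner p \<inter> inner q = {}"
    using assms(1,3-5) unfolding rw_path_system_def by blast
  ultimately show ?thesis
    using bq(4,5) by auto
qed

lemma tails_without_path:
  assumes "rw_path_system V E r w Ps" "w \<noteq> r" "pf \<in> Ps"
    and "last_edge ` Ps = insert (last_edge pf) I" "last_edge pf \<in> I \<longrightarrow> fst (last_edge pf) = r"
  shows "fst ` last_edge ` (Ps - {pf}) - {r} = fst ` I - {r}"
proof
  show "fst ` last_edge ` (Ps - {pf}) - {r} \<subseteq> fst ` I - {r}"
  proof
    fix t
    assume "t \<in> fst ` last_edge ` (Ps - {pf}) - {r}"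
    then obtain p where p: "p \<in> Ps" "p \<noteq> pf" "t = fst (last_edge p)" "t \<noteq> r"
      by blast
    then have "last_edge p \<noteq> last_edge pf"
      using rw_path_system_tail_inj[OF assms(1,2) p(1) assms(3)] by auto
    then have "last_edge p \<in> I"
      using assms(4) p(1) by blast
    then show "t \<in> fst ` I - {r}"
      using p(3,4) by blast
  qed
  show "fst ` I - {r} \<subseteq> fst ` last_edge ` (Ps - {pf}) - {r}"
  proof
    fix t
    assume "t \<in> fst ` I - {r}"
    then obtain g where g: "g \<in> I" "t = fst g" "t \<noteq> r"
      by blast
    then obtain p where p: "p \<in> Ps" "last_edge p = g"
      using assms(4) by (metis imageE insertCI)
    then have "p \<noteq> pf"
      using assms(5) g by auto
    then show "t \<in> fst ` last_edge ` (Ps - {pf}) - {r}"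
      using p g by blast
  qed
qed

lemma fan_of_rw_path_system_avoids_target:
  assumes "rw_path_system V E r w Ps" "w \<noteq> r" "q \<in> butlast ` {p \<in> Ps. fst (last_edge p) \<noteq> r}"
  shows "w \<notin> set q"
  using assms butlast_rw_path(5)[of V E _ r w] unfolding rw_path_system_def by blast

lemma fan_to_tails:
  assumes "w \<noteq> r" "I \<in> Gset V E r w" "\<forall>f \<in> in_edges E w - I. insert f I \<in> Gset V E r w"
  obtains Y L where "fst ` I - {r} \<subseteq> Y" "Y \<subseteq> insert w (fst ` I - {r})"
    "w \<in> Y \<or> (\<forall>y. (y, w) \<in> E \<longrightarrow> y \<in> Y)" "fan V E r Y L" "\<forall>p\<in>L. w \<notin> set (butlast p)"
proof -
  let ?T = "fst ` I - {r}"
  \<comment> \<open>f = (r, w) \<in> I is allowed: then I + f = I, and the path kept whole is [r, w].\<close>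
  consider (extra) f where "f \<in> in_edges E w" "insert f I \<in> Gset V E r w" "f \<in> I \<longrightarrow> fst f = r"
    | (saturated) "in_edges E w \<subseteq> I" "(r, w) \<notin> E"
  proof (cases "in_edges E w \<subseteq> I")
    case True
    then show ?thesis
      using that(1)[of "(r, w)"] that(2) assms(2) by (force simp: in_edges_def insert_absorb)
  qed (use that(1) assms(3) in blast)
  then show ?thesis
  proof cases
    case (extra f)
    obtain Ps where Ps: "rw_path_system V E r w Ps" "last_edge ` Ps = insert f I"
      using extra(2) unfolding Gset_def by blast
    then obtain pf where pf: "pf \<in> Ps" "last_edge pf = f"
      by (metis imageE insertI1)
    define L where "L = butlast ` {p \<in> Ps - {pf}. fst (last_edge p) \<noteq> r}"
    have Ps': "rw_path_system V E r w (Ps - {pf})"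
      using Ps(1) unfolding rw_path_system_def by blast
    have "fan V E r ?T L"
      using fan_of_rw_path_system[OF Ps' assms(1)]
        tails_without_path[OF Ps(1) assms(1) pf(1)] Ps(2) pf(2) extra(3)
      unfolding L_def by simp
    moreover have "dpath V E pf" "hd pf = r" "last pf = w"
      using Ps(1) pf(1) unfolding rw_path_system_def by auto
    moreover have "\<forall>q\<in>L. set pf \<inter> set q \<subseteq> {r}"
      using rw_path_system_meets_butlast[OF Ps(1) assms(1) pf(1)] unfolding L_def by blast
    ultimately have "fan V E r (insert w ?T) (insert pf L)"
      using fan_insert by metis
    moreover have "\<forall>p\<in>insert pf L. w \<notin> set (butlast p)"
      using butlast_rw_path(5)[OF \<open>dpath V E pf\<close> \<open>hd pf = r\<close> \<open>last pf = w\<close> assms(1)]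
        fan_of_rw_path_system_avoids_target[OF Ps' assms(1)] unfolding L_def
      by (auto dest: in_set_butlastD)
    ultimately show ?thesis
      using that[of "insert w ?T" "insert pf L"] by blast
  next
    case saturated
    obtain Ps where Ps: "rw_path_system V E r w Ps" "last_edge ` Ps = I"
      using assms(2) unfolding Gset_def by blast
    define L where "L = butlast ` {p \<in> Ps. fst (last_edge p) \<noteq> r}"
    have "fan V E r ?T L"
      using fan_of_rw_path_system[OF Ps(1) assms(1)] Ps(2) unfolding L_def by simp
    moreover have "\<forall>y. (y, w) \<in> E \<longrightarrow> y \<in> ?T"
      using saturated by (force simp: in_edges_def)
    moreover have "\<forall>p\<in>L. w \<notin> set (butlast p)"
      using fan_of_rw_path_system_avoids_target[OF Ps(1) assms(1)] unfolding L_def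
      by (auto dest: in_set_butlastD)
    ultimately show ?thesis
      using that[of ?T L] by blast
  qed
qed

section \<open>Fans cut by a separator\<close>

lemma fan_card:
  assumes "fan V E r Y L" "r \<notin> Y"
  shows "card L = card Y"
proof -
  have "inj_on last L"
  proof (rule inj_on_vertex_choice[where X = "-{r}"])
    fix p
    assume "p \<in> L"
    then show "last p \<in> set p \<inter> - {r}"
      using assms unfolding fan_def dpath_def by auto
  next
    fix p q
    assume "p \<in> L" "q \<in> L" "p \<noteq> q"
    then show "set p \<inter> set q \<inter> - {r} = {}"
      using assms(1) unfolding fan_def by blast
  qed
  then show ?thesis
    using assms(1) card_image unfolding fan_def by metis
qed

lemma hitting_paths_card_le:
  assumes "\<forall>p\<in>L. \<forall>q\<in>L. p \<noteq> q \<longrightarrow> set p \<inter> set q \<subseteq> {r}" "\<forall>p\<in>L. set p \<inter> Z \<noteq> {}"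
    and "r \<notin> Z" "finite Z"
  shows "card L \<le> card Z"
proof -
  have "\<forall>p\<in>L. \<exists>z. z \<in> set p \<inter> Z"
    using assms(2) by blast
  then obtain f where f: "\<And>p. p \<in> L \<Longrightarrow> f p \<in> set p \<inter> Z"
    using bchoice by metis
  have "inj_on f L"
  proof (rule inj_on_vertex_choice[OF f])
    show "set p \<inter> set q \<inter> Z = {}" if "p \<in> L" "q \<in> L" "p \<noteq> q" for p q
      using assms(1,3) that by blast
  qed
  then show ?thesis
    using f assms(4) by (intro card_inj_on_le) auto
qed

lemma truncate_at_separator:
  assumes "\<forall>p\<in>L. dpath V E p \<and> hd p = r \<and> set p \<inter> Z \<noteq> {}"
    and "\<forall>p\<in>L. \<forall>q\<in>L. p \<noteq> q \<longrightarrow> set p \<inter> set q \<subseteq> {r}" "r \<notin> Z" "finite Z" "card Z \<le> card L"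
  obtains Ps where "rS_path_system V E r Z Ps" "last ` Ps = Z" "\<forall>q\<in>Ps. \<exists>p\<in>L. set q \<subseteq> set p"
proof -
  have "\<forall>p\<in>L. \<exists>q. dpath V E q \<and> hd q = r \<and> last q \<in> Z \<and> set (butlast q) \<inter> Z = {} \<and>
      set q \<subseteq> set p"
  proof
    fix p
    assume "p \<in> L"
    then have "dpath V E p" "hd p = r" "set p \<inter> Z \<noteq> {}"
      using assms(1) by auto
    then obtain q where "dpath V E q" "hd q = r" "last q \<in> Z" "set (butlast q) \<inter> Z = {}"
      "set q \<subseteq> set p"
      using dpath_first_hit[of V E p Z] by metis
    then show "\<exists>q. dpath V E q \<and> hd q = r \<and> last q \<in> Z \<and> set (butlast q) \<inter> Z = {} \<and>
      set q \<subseteq> set p"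
      by blast
  qed
  then obtain f where f: "\<And>p. p \<in> L \<Longrightarrow> dpath V E (f p) \<and> hd (f p) = r \<and> last (f p) \<in> Z \<and>
      set (butlast (f p)) \<inter> Z = {} \<and> set (f p) \<subseteq> set p"
    by (metis (no_types, lifting) bchoice)
  have inner_f: "inner (f p) \<inter> Z = {}" if "p \<in> L" for p
    using f[OF that] inner_subset_butlast[of "f p"] by blast
  have "inj_on (last \<circ> f) L"
  proof (rule inj_on_vertex_choice[where X = Z])
    fix p
    assume "p \<in> L"
    then have "f p \<noteq> []"
      using f[OF \<open>p \<in> L\<close>] by (simp add: dpath_def)
    then have "last (f p) \<in> set (f p)"
      by simp
    then show "(last \<circ> f) p \<in> set p \<inter> Z"
      using f[OF \<open>p \<in> L\<close>] by auto
  qed (use assms(2,3) in blast)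
  then have "card (last ` f ` L) = card L"
    using card_image by (fastforce simp: image_comp)
  moreover have "last ` f ` L \<subseteq> Z"
    using f by auto
  moreover have "card (last ` f ` L) \<le> card Z"
    using card_mono[OF assms(4) \<open>last ` f ` L \<subseteq> Z\<close>] .
  ultimately have "last ` f ` L = Z"
    using assms(4,5) by (intro card_subset_eq) simp_all
  moreover have "rS_path_system V E r Z (f ` L)"
    unfolding rS_path_system_def
  proof (intro conjI)
    show "\<forall>q\<in>f ` L. dpath V E q \<and> hd q = r \<and> last q \<in> Z \<and> inner q \<inter> Z = {}"
      using f inner_f by simp
    show "\<forall>q\<in>f ` L. \<forall>q'\<in>f ` L. q \<noteq> q' \<longrightarrow> set q \<inter> set q' \<subseteq> {r}"
    proof (intro ballI impI)
      fix q q'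
      assume "q \<in> f ` L" "q' \<in> f ` L" "q \<noteq> q'"
      then obtain p p' where "p \<in> L" "p' \<in> L" "p \<noteq> p'" "q = f p" "q' = f p'"
        by blast
      then show "set q \<inter> set q' \<subseteq> {r}"
        using f[of p] f[of p'] assms(2) by blast
    qed
  qed
  ultimately show ?thesis
    using that f by blast
qed

lemma rS_path_system_insert:
  assumes "rS_path_system V E r Z Ps" "dpath V E q" "hd q = r" "last q = v" "v \<noteq> r"
    and "inner q \<inter> Z = {}" "\<forall>p\<in>Ps. set q \<inter> set p \<subseteq> {r}"
  shows "rS_path_system V E r (insert v Z) (insert q Ps)"
  unfolding rS_path_system_def
proof (intro conjI)
  have "q \<noteq> []" "distinct q"
    using assms(2) by (auto simp: dpath_def)
  then have "v \<notin> inner q" "v \<in> set q"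
    using assms(4) last_notin_inner[of q] by auto
  moreover have "v \<notin> inner p" if "p \<in> Ps" for p
    using \<open>v \<in> set q\<close> assms(5,7) that inner_subset[of p] by blast
  ultimately show "\<forall>p\<in>insert q Ps. dpath V E p \<and> hd p = r \<and> last p \<in> insert v Z \<and>
      inner p \<inter> insert v Z = {}"
    using assms(1-4,6) unfolding rS_path_system_def by auto
  show "\<forall>p\<in>insert q Ps. \<forall>p'\<in>insert q Ps. p \<noteq> p' \<longrightarrow> set p \<inter> set p' \<subseteq> {r}"
    using assms(1,7) unfolding rS_path_system_def by blast
qed

section \<open>Rerouting through the edge uv\<close>

(* E - {(u, v)} - {w} \<times> UNIV is D - uv with the out-edges of w removed. *)
lemma path_edges_subset_Diff_out_edges:
  assumes "path_edges p \<subseteq> E" "(u, v) \<notin> path_edges p" "w \<notin> set (butlast p)"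
  shows "path_edges p \<subseteq> E - {(u, v)} - {w} \<times> UNIV"
  using assms path_edges_subset[of p] by auto

lemma path_through_target_reaches:
  assumes "dpath V E p" "hd p = r" "r \<noteq> w" "w \<in> set p" "v \<notin> set p" "set p \<inter> Z = {}"
    and "w \<in> Y \<or> (\<forall>y. (y, w) \<in> E \<longrightarrow> y \<in> Y)"
  shows "\<exists>y\<in>Y. reaches_avoiding (E - {(u, v)} - {w} \<times> UNIV) Z r y"
proof -
  let ?H = "E - {(u, v)} - {w} \<times> UNIV"
  obtain p1 p2 where p12: "p = p1 @ w # p2"
    using split_list[OF assms(4)] by blast
  then have "p1 \<noteq> []" "w \<notin> set p1"
    using assms(1-3) by (auto simp: dpath_def)
  have "path_edges (p1 @ [w]) \<subseteq> path_edges p"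
    using p12 path_edges_append_subset[of "p1 @ [w]" p2] by simp
  also have "\<dots> \<subseteq> E"
    using assms(1) by (simp add: dpath_iff_path_edges)
  finally have "path_edges (p1 @ [w]) \<subseteq> E" .
  moreover have "(u, v) \<notin> path_edges (p1 @ [w])"
    using assms(5) p12 path_edges_subset_set[of "p1 @ [w]"] by auto
  ultimately have H: "path_edges (p1 @ [w]) \<subseteq> ?H"
    using \<open>w \<notin> set p1\<close> by (intro path_edges_subset_Diff_out_edges) auto
  have Z: "set (p1 @ [w]) \<inter> Z = {}"
    using assms(6) p12 by auto
  show ?thesis
  proof (cases "w \<in> Y")
    case True
    then show ?thesis
      using path_reaches_avoiding[OF _ H Z] assms(2) p12 \<open>p1 \<noteq> []\<close> by auto
  next
    case False
    have "reaches_avoiding ?H Z r (last p1)"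
      using path_reaches_avoiding[of p1 ?H Z] H Z assms(2) p12 \<open>p1 \<noteq> []\<close>
        path_edges_append_subset[of p1 "[w]"] by auto
    moreover have "(last p1, w) \<in> E"
      using \<open>path_edges (p1 @ [w]) \<subseteq> E\<close> \<open>p1 \<noteq> []\<close> by (auto simp: path_edges_append)
    then have "last p1 \<in> Y"
      using assms(7) False by blast
    ultimately show ?thesis
      by blast
  qed
qed

lemma in_neighbour_paths_meet:
  assumes sep: "separates (E - {(u, v)} - {w} \<times> UNIV) Z {r} Y"
    and "r \<noteq> w" "w \<in> Y \<or> (\<forall>y. (y, w) \<in> E \<longrightarrow> y \<in> Y)"
    and Q: "dpath V E Q" "hd Q = v" "last Q \<in> Y" "u \<notin> set Q" "w \<notin> set (butlast Q)" "set Q \<inter> Z = {}"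
    and x: "(x, v) \<in> E" "x \<noteq> u"
    and p: "dpath V E p" "hd p = r" "last p = x"
  shows "set p \<inter> insert v Z \<noteq> {}"
proof
  let ?H = "E - {(u, v)} - {w} \<times> UNIV"
  assume avoid: "set p \<inter> insert v Z = {}"
  show False
  proof (cases "w \<in> set p")
    case True
    then show False
      using path_through_target_reaches[OF p(1,2) assms(2) True _ _ assms(3)] avoid sep
      by (auto simp: separates_def)
  next
    case False
    have "p \<noteq> []" "path_edges p \<subseteq> E"
      using p(1) by (auto simp: dpath_iff_path_edges)
    moreover have "(u, v) \<notin> path_edges p"
      using avoid path_edges_subset_set[of p] by auto
    ultimately have "reaches_avoiding ?H Z r x"
      using path_reaches_avoiding[of p ?H Z] path_edges_subset_Diff_out_edges[of p E u v w]
        False avoid p(2,3) by (auto dest: in_set_butlastD)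
    moreover have "x \<noteq> w"
      using False p(3) \<open>p \<noteq> []\<close> last_in_set by fastforce
    moreover have "Q \<noteq> []" "path_edges Q \<subseteq> E"
      using Q(1) by (auto simp: dpath_iff_path_edges)
    moreover have "v \<notin> Z"
      using Q(2,6) \<open>Q \<noteq> []\<close> hd_in_set[of Q] by blast
    ultimately have "reaches_avoiding ?H Z r v"
      using x by (intro reaches_avoiding_step[of ?H Z r x v]) auto
    moreover have "(u, v) \<notin> path_edges Q"
      using Q(4) path_edges_subset_set[of Q] by auto
    then have "reaches_avoiding ?H Z v (last Q)"
      using path_reaches_avoiding[of Q ?H Z] path_edges_subset_Diff_out_edges[of Q E u v w]
        \<open>Q \<noteq> []\<close> \<open>path_edges Q \<subseteq> E\<close> Q(2,5,6) by simp
    ultimately have "reaches_avoiding ?H Z r (last Q)"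
      by (rule reaches_avoiding_trans)
    then show False
      using sep Q(3) by (auto simp: separates_def)
  qed
qed

lemma small_separator:
  assumes "digraph V E" "r \<in> V" "r \<noteq> w" "v \<noteq> w"
    and "I \<subseteq> in_edges E w" "I \<notin> Gset V (E - {(u, v)}) r w" "fst ` I - {r} \<subseteq> Y" "Y \<subseteq> V - {r}"
  obtains Z where "Z \<subseteq> V - {r}" "card Z < card Y" "separates (E - {(u, v)} - {w} \<times> UNIV) Z {r} Y"
proof -
  let ?H = "E - {(u, v)} - {w} \<times> UNIV"
  have "\<not> (\<forall>Z. Z \<subseteq> V - {r} \<longrightarrow> separates ?H Z {r} Y \<longrightarrow> card Y \<le> card Z)"
  proof
    assume "\<forall>Z. Z \<subseteq> V - {r} \<longrightarrow> separates ?H Z {r} Y \<longrightarrow> card Y \<le> card Z"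
    moreover have "finite V" "?H \<subseteq> V \<times> V"
      using assms(1) by (auto simp: digraph_def)
    ultimately obtain L where "fan V ?H r Y L"
      using fan_menger assms(2,8) by metis
    moreover have "digraph V (E - {(u, v)})"
      using assms(1) by (auto simp: digraph_def)
    moreover have "I \<subseteq> in_edges (E - {(u, v)}) w"
      using assms(4,5) by (auto simp: in_edges_def)
    ultimately have "I \<in> Gset V (E - {(u, v)}) r w"
      using assms(3,7) by (intro Gset_of_fan[where H = ?H and Y = Y and L = L]) auto
    then show False
      using assms(6) by contradiction
  qed
  then show thesis
    using that by (auto simp: not_le)
qed

lemma fan_path_through_edge:
  assumes "fan V E r Y L" "r \<notin> Y" "finite Z" "r \<notin> Z" "card Z < card Y" "u \<noteq> r"
    and hit: "\<And>p. p \<in> L \<Longrightarrow> (u, v) \<notin> path_edges p \<Longrightarrow> set p \<inter> Z \<noteq> {}"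
  obtains P where "P \<in> L" "(u, v) \<in> path_edges P" "set P \<inter> Z = {}" "\<forall>p\<in>L - {P}. set p \<inter> Z \<noteq> {}"
proof -
  have card_L: "card L = card Y"
    using fan_card[OF assms(1,2)] .
  have disj: "\<forall>p\<in>L. \<forall>q\<in>L. p \<noteq> q \<longrightarrow> set p \<inter> set q \<subseteq> {r}"
    using assms(1) by (simp add: fan_def)
  obtain P where P: "P \<in> L" "(u, v) \<in> path_edges P"
  proof -
    have "\<not> (\<forall>p\<in>L. set p \<inter> Z \<noteq> {})"
      using hitting_paths_card_le[OF disj _ assms(4,3)] card_L assms(5) by auto
    then show thesis
      using that hit by blast
  qed
  have others: "\<forall>p\<in>L - {P}. set p \<inter> Z \<noteq> {}"
  proof
    fix p
    assume "p \<in> L - {P}"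
    moreover have "u \<in> set P"
      using P(2) path_edges_subset_set[of P] by auto
    ultimately have "u \<notin> set p"
      using disj P(1) assms(6) by blast
    then have "(u, v) \<notin> path_edges p"
      using path_edges_subset_set[of p] by auto
    then show "set p \<inter> Z \<noteq> {}"
      using hit \<open>p \<in> L - {P}\<close> by blast
  qed
  have "set P \<inter> Z = {}"
  proof (rule ccontr)
    assume "set P \<inter> Z \<noteq> {}"
    then obtain z where z: "z \<in> set P" "z \<in> Z"
      by blast
    have "\<forall>p\<in>L - {P}. set p \<inter> (Z - {z}) \<noteq> {}"
    proof
      fix p
      assume p: "p \<in> L - {P}"
      then have "z \<notin> set p"
        using disj P(1) z assms(4) by blast
      then show "set p \<inter> (Z - {z}) \<noteq> {}"
        using others p by blast
    qed
    then have "card (L - {P}) \<le> card (Z - {z})"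
      using disj assms(3,4) by (intro hitting_paths_card_le) auto
    moreover have "finite L"
      using card_L assms(5) by (intro card_ge_0_finite) simp
    moreover have "card Z > 0"
      using z(2) assms(3) card_gt_0_iff by blast
    ultimately show False
      using card_L assms(5) P(1) z(2) by (simp add: card_Diff_singleton)
  qed
  then show ?thesis
    using that P others by blast
qed

lemma rS_path_system_from_fan:
  assumes L: "fan V E r Y L" "r \<notin> Y" and Z: "finite Z" "r \<notin> Z" "card Z < card Y"
    and P: "P \<in> L" "set P \<inter> Z = {}" "\<forall>p\<in>L - {P}. set p \<inter> Z \<noteq> {}"
    and Q: "dpath V E Q" "hd Q = r" "last Q = v" "v \<noteq> r" "set Q \<subseteq> set P"
  obtains Ps where "rS_path_system V E r (insert v Z) Ps" "last ` Ps = insert v Z" "Q \<in> Ps"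
proof -
  have "card Z \<le> card (L - {P})"
  proof -
    have "finite L"
      using fan_card[OF L] Z(3) by (intro card_ge_0_finite) simp
    then show ?thesis
      using fan_card[OF L] Z(3) P(1) by simp
  qed
  moreover have "\<forall>p\<in>L - {P}. dpath V E p \<and> hd p = r \<and> set p \<inter> Z \<noteq> {}"
    using L(1) P(3) by (auto simp: fan_def)
  moreover have "\<forall>p\<in>L - {P}. \<forall>q\<in>L - {P}. p \<noteq> q \<longrightarrow> set p \<inter> set q \<subseteq> {r}"
    using L(1) by (auto simp: fan_def)
  ultimately obtain Ps where Ps: "rS_path_system V E r Z Ps" "last ` Ps = Z"
    "\<forall>q\<in>Ps. \<exists>p\<in>L - {P}. set q \<subseteq> set p"
    using truncate_at_separator[of "L - {P}" V E r Z] Z(1,2) by metis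
  have "\<forall>q\<in>Ps. set Q \<inter> set q \<subseteq> {r}"
  proof
    fix q
    assume "q \<in> Ps"
    then obtain p where "p \<in> L - {P}" "set q \<subseteq> set p"
      using Ps(3) by blast
    moreover from this(1) have "set P \<inter> set p \<subseteq> {r}"
      using L(1) P(1) unfolding fan_def by blast
    ultimately show "set Q \<inter> set q \<subseteq> {r}"
      using Q(5) by blast
  qed
  moreover have "inner Q \<inter> Z = {}"
    using inner_subset[of Q] Q(5) P(2) by blast
  ultimately have "rS_path_system V E r (insert v Z) (insert Q Ps)"
    using rS_path_system_insert[OF Ps(1) Q(1-4)] by auto
  moreover have "last ` insert Q Ps = insert v Z"
    using Q(3) Ps(2) by simp
  ultimately show ?thesis
    using that by blast
qed

lemma separating_system_through_edge:
  assumes "digraph V E" "r \<in> V" "w \<noteq> r" "(u, v) \<in> E" "u \<noteq> r" "v \<noteq> w"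
    and "I \<subseteq> in_edges E w" "I \<notin> Gset V (E - {(u, v)}) r w"
    and "fst ` I - {r} \<subseteq> Y" "Y \<subseteq> V - {r}" "w \<in> Y \<or> (\<forall>y. (y, w) \<in> E \<longrightarrow> y \<in> Y)"
    and L: "fan V E r Y L" "\<forall>p\<in>L. w \<notin> set (butlast p)"
  shows "\<exists>S Ps. S \<subseteq> V - {r} \<and> v \<in> S \<and> rS_path_system V E r S Ps \<and> last ` Ps = S \<and>
           (\<forall>x. (x, v) \<in> in_edges E v - {(u, v)} \<longrightarrow>
              (\<forall>p. dpath V E p \<and> hd p = r \<and> last p = x \<longrightarrow> set p \<inter> S \<noteq> {})) \<and>
           (\<exists>P\<in>Ps. 2 \<le> length P \<and> last_edge P = (u, v))"
proof -
  let ?H = "E - {(u, v)} - {w} \<times> UNIV"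
  obtain Z where Z: "Z \<subseteq> V - {r}" "card Z < card Y" "separates ?H Z {r} Y"
    by (rule small_separator[OF assms(1,2) assms(3)[symmetric] assms(6-10)])
  have "finite V"
    using assms(1) by (simp add: digraph_def)
  then have "finite Z" "r \<notin> Z" "r \<notin> Y"
    using Z(1) assms(10) finite_subset[of Z V] by auto
  have L_paths: "dpath V E p" "hd p = r" "last p \<in> Y" if "p \<in> L" for p
    using L(1) that by (auto simp: fan_def)
  have hit: "set p \<inter> Z \<noteq> {}" if "p \<in> L" "(u, v) \<notin> path_edges p" for p
  proof
    assume "set p \<inter> Z = {}"
    have "path_edges p \<subseteq> ?H"
      using L_paths(1)[OF that(1)] L(2) that(1,2)
      by (intro path_edges_subset_Diff_out_edges) (auto simp: dpath_iff_path_edges)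
    then have "reaches_avoiding ?H Z r (last p)"
      using path_reaches_avoiding[of p ?H Z] L_paths[OF that(1)] \<open>set p \<inter> Z = {}\<close>
      by (simp add: dpath_def)
    then show False
      using Z(3) L_paths(3)[OF that(1)] by (auto simp: separates_def)
  qed
  obtain P where P: "P \<in> L" "(u, v) \<in> path_edges P" "set P \<inter> Z = {}"
    "\<forall>p\<in>L - {P}. set p \<inter> Z \<noteq> {}"
    by (rule fan_path_through_edge[OF L(1) \<open>r \<notin> Y\<close> \<open>finite Z\<close> \<open>r \<notin> Z\<close> Z(2) assms(5) hit])
  obtain Q R where Q: "dpath V E Q" "hd Q = hd P" "last Q = v" "last_edge Q = (u, v)" "2 \<le> length Q"
    "set Q \<subseteq> set P" "hd P \<noteq> v" and R: "dpath V E R" "hd R = v" "last R = last P" "u \<notin> set R"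
    "set R \<subseteq> set P" "set (butlast R) \<subseteq> set (butlast P)"
    by (rule dpath_split_at_edge[OF L_paths(1)[OF P(1)] P(2)])
  have "hd Q = r" "r \<noteq> v" "last R \<in> Y" "w \<notin> set (butlast R)"
    using Q(2,7) R(3,6) L_paths[OF P(1)] L(2) P(1) by auto
  obtain Ps where Ps: "rS_path_system V E r (insert v Z) Ps" "last ` Ps = insert v Z" "Q \<in> Ps"
    by (rule rS_path_system_from_fan[OF L(1) \<open>r \<notin> Y\<close> \<open>finite Z\<close> \<open>r \<notin> Z\<close> Z(2) P(1,3,4) Q(1)
          \<open>hd Q = r\<close> Q(3) \<open>r \<noteq> v\<close>[symmetric] Q(6)])
  moreover have "insert v Z \<subseteq> V - {r}"
    using Z(1) \<open>r \<noteq> v\<close> assms(1,4) by (auto simp: digraph_def)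
  moreover have "set p \<inter> insert v Z \<noteq> {}"
    if "(x, v) \<in> in_edges E v - {(u, v)}" "dpath V E p" "hd p = r" "last p = x" for x p
    using in_neighbour_paths_meet[OF Z(3) _ assms(11) R(1,2) \<open>last R \<in> Y\<close> R(4)
        \<open>w \<notin> set (butlast R)\<close>] that assms(3) P(3) R(5)
    by (auto simp: in_edges_def)
  ultimately show ?thesis
    using Q(4,5) by blast
qed

theorem lemma4p10:
  fixes V :: "'a set" and E :: "('a \<times> 'a) set" and r w u v :: 'a
  assumes "digraph V E" and "r \<in> V" and "w \<in> V" and "w \<noteq> r"
    and "I \<in> Gset V E r w"
    and "\<forall>f \<in> in_edges E w - I. insert f I \<in> Gset V E r w"
    and "(u, v) \<in> E" and "u \<noteq> r" and "v \<noteq> w"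
    and "I \<notin> Gset V (E - {(u, v)}) r w"
  shows "\<exists>S Ps. S \<subseteq> V - {r} \<and> v \<in> S \<and> rS_path_system V E r S Ps \<and> last ` Ps = S \<and>
           (\<forall>x. (x, v) \<in> in_edges E v - {(u, v)} \<longrightarrow>
              (\<forall>p. dpath V E p \<and> hd p = r \<and> last p = x \<longrightarrow> set p \<inter> S \<noteq> {})) \<and>
           (\<exists>P\<in>Ps. 2 \<le> length P \<and> last_edge P = (u, v))"
proof -
  have I: "I \<subseteq> in_edges E w"
    using assms(5) by (simp add: Gset_def)
  obtain Y L where Y: "fst ` I - {r} \<subseteq> Y" "Y \<subseteq> insert w (fst ` I - {r})"
    "w \<in> Y \<or> (\<forall>y. (y, w) \<in> E \<longrightarrow> y \<in> Y)" and L: "fan V E r Y L" "\<forall>p\<in>L. w \<notin> set (butlast p)"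
    by (rule fan_to_tails[OF assms(4-6)])
  have "fst ` I \<subseteq> V"
    using I assms(1) by (auto simp: in_edges_def digraph_def)
  then have "Y \<subseteq> V - {r}"
    using Y(2) assms(3,4) by blast
  then show ?thesis
    by (rule separating_system_through_edge[OF assms(1,2,4,7-9) I assms(10) Y(1) _ Y(3) L])
qed

end
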